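(* Let $Y\subseteq\Omega$, $L\in\mathcal{I}^{\mathbf{c}}(Y)$ and $e\in\max(Y)-L$, and let $k=|\langle\{e\}\rangle_Y|$. Then $$\pi(Y,L)-\pi(Y,L\cup\{e\})=(\eta_{(e)}+1_K)\Big(\prod_{i\in\langle\{e\}\rangle_Y-\{e\}}\tau_{(i)}\Big)x^{k}\,\pi(Y-\langle\{e\}\rangle_Y,L).$$
   Context: $\Omega$ is a finite set and $\mathbf{P}=(\Omega,\preccurlyeq_{\mathbf{P}})$ a poset. For $Y\subseteq\Omega$: $\max(Y)$ is the set of maximal elements of $Y$ w.r.t. $\preccurlyeq_{\mathbf{P}}$; $\mathcal{I}(Y)$ is the set of down-closed subsets of $Y$ (induced order); $\mathcal{I}^{\mathbf{c}}(Y)$ is the set of up-closed subsets of $Y$; for $A\subseteq Y$, $\langle A\rangle_Y=\{y\in Y:\exists a\in A, y\preccurlyeq_{\mathbf{P}}a\}$. $K$ is a commutative ring, $\tau,\eta\in K^{\Omega}$. For $D,I\subseteq\Omega$, $\varphi(D,I)=(-1)^{|I\cap D|}\big(\prod_{i\in I-\max(I)}\tau_{(i)}\big)\big(\prod_{i\in\max(I)-D}\eta_{(i)}\big)$ if $I\cap D\subseteq\max(I)$, and $0$ otherwise; for $D\subseteq Y\subseteq\Omega$, $\pi(Y,D)=\sum_{I\in\mathcal{I}(Y)}\varphi(D,I)x^{|I|}\in K[x]$. *)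

theory Defs
  imports "HOL-Computational_Algebra.Polynomial"
begin

text \<open>The poset order is a relation P (set of pairs), (a,b) in P meaning a below-or-equal b.\<close>

definition maxel :: "('a \<times> 'a) set \<Rightarrow> 'a set \<Rightarrow> 'a set" where
  "maxel P Y = {y \<in> Y. \<forall>z \<in> Y. (y, z) \<in> P \<longrightarrow> z = y}"

definition downsets :: "('a \<times> 'a) set \<Rightarrow> 'a set \<Rightarrow> 'a set set" where
  "downsets P Y = {I. I \<subseteq> Y \<and> (\<forall>i \<in> I. \<forall>y \<in> Y. (y, i) \<in> P \<longrightarrow> y \<in> I)}"

definition upsets :: "('a \<times> 'a) set \<Rightarrow> 'a set \<Rightarrow> 'a set set" where
  "upsets P Y = {I. I \<subseteq> Y \<and> (\<forall>i \<in> I. \<forall>y \<in> Y. (i, y) \<in> P \<longrightarrow> y \<in> I)}"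

definition downclosure :: "('a \<times> 'a) set \<Rightarrow> 'a set \<Rightarrow> 'a set \<Rightarrow> 'a set" where
  "downclosure P Y A = {y \<in> Y. \<exists>a \<in> A. (y, a) \<in> P}"

definition phi :: "('a \<times> 'a) set \<Rightarrow> ('a \<Rightarrow> 'k::comm_ring_1) \<Rightarrow> ('a \<Rightarrow> 'k) \<Rightarrow> 'a set \<Rightarrow> 'a set \<Rightarrow> 'k" where
  "phi P \<tau> \<eta> D I =
     (if I \<inter> D \<subseteq> maxel P I
      then (-1) ^ card (I \<inter> D) * (\<Prod>i \<in> I - maxel P I. \<tau> i) * (\<Prod>i \<in> maxel P I - D. \<eta> i)
      else 0)"

definition pipoly :: "('a \<times> 'a) set \<Rightarrow> ('a \<Rightarrow> 'k::comm_ring_1) \<Rightarrow> ('a \<Rightarrow> 'k) \<Rightarrow> 'a set \<Rightarrow> 'a set \<Rightarrow> 'k poly" where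
  "pipoly P \<tau> \<eta> Y D = (\<Sum>I \<in> downsets P Y. monom (phi P \<tau> \<eta> D I) (card I))"

end

theory Submission
  imports Defs
begin

text \<open>
  Since \<open>\<phi>(D, I)\<close> only depends on \<open>I \<inter> D\<close>, the downsets \<open>I\<close> not containing \<open>e\<close> contribute
  equally to \<open>\<pi>(Y, L)\<close> and \<open>\<pi>(Y, L \<union> {e})\<close>. The downsets containing \<open>e\<close>
  are exactly the sets \<open>E \<union> J\<close> with \<open>E = \<langle>{e}\<rangle>\<^sub>Y\<close> and \<open>J\<close> a downset of \<open>Y - E\<close>, and since
  \<open>e\<close> is maximal in \<open>Y\<close>, the maximal elements of \<open>E \<union> J\<close> are \<open>e\<close> together with those of \<open>J\<close>. Hence \<open>e\<close> contributes the
  factor \<open>\<eta>\<^sub>e\<close> to the first \<open>\<phi>\<close> and the sign \<open>-1\<close> to the second, the rest of \<open>E\<close> contributes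
  \<open>\<Prod>\<tau>\<close>, and what remains is \<open>\<phi>(L, J)\<close>.
\<close>

lemma maxel_subset: "maxel P I \<subseteq> I"
  unfolding maxel_def by auto

lemma finite_downsets: "finite Y \<Longrightarrow> finite (downsets P Y)"
  unfolding downsets_def by simp

lemma downclosure_in_downsets: "trans P \<Longrightarrow> downclosure P Y A \<in> downsets P Y"
  unfolding downsets_def downclosure_def by (auto dest: transD)

lemma upset_Int_downclosure_singleton:
  assumes "L \<in> upsets P Y" "e \<in> Y" "e \<notin> L"
  shows "L \<inter> downclosure P Y {e} = {}"
  using assms unfolding upsets_def downclosure_def by auto

lemma phi_cong_Int:
  assumes "I \<inter> D = I \<inter> D'"
  shows "phi P \<tau> \<eta> D I = phi P \<tau> \<eta> D' I"
proof -
  have "maxel P I - D = maxel P I - D'"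
    using assms maxel_subset[of P I] by blast
  then show ?thesis
    unfolding phi_def assms by (simp only:)
qed

lemma pipoly_diff_insert:
  assumes "finite Y"
  shows "pipoly P \<tau> \<eta> Y L - pipoly P \<tau> \<eta> Y (insert e L) =
    (\<Sum>I \<in> {I \<in> downsets P Y. e \<in> I}.
       monom (phi P \<tau> \<eta> L I - phi P \<tau> \<eta> (insert e L) I) (card I))"
proof -
  have agree: "phi P \<tau> \<eta> L I = phi P \<tau> \<eta> (insert e L) I" if "e \<notin> I" for I
    using that by (intro phi_cong_Int) auto
  have "pipoly P \<tau> \<eta> Y L - pipoly P \<tau> \<eta> Y (insert e L) =
    (\<Sum>I \<in> downsets P Y. monom (phi P \<tau> \<eta> L I - phi P \<tau> \<eta> (insert e L) I) (card I))"
    unfolding pipoly_def sum_subtractf[symmetric] by (simp add: diff_monom)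
  also have "\<dots> = (\<Sum>I \<in> {I \<in> downsets P Y. e \<in> I}.
      monom (phi P \<tau> \<eta> L I - phi P \<tau> \<eta> (insert e L) I) (card I))"
    using finite_downsets[OF assms] agree
    by (intro sum.mono_neutral_right) auto
  finally show ?thesis .
qed

lemma maxel_Un_downclosure_singleton:
  assumes "trans P" "(e, e) \<in> P" "e \<in> maxel P Y"
    and J: "J \<subseteq> Y - downclosure P Y {e}"
  shows "maxel P (downclosure P Y {e} \<union> J) = insert e (maxel P J)"
proof -
  define E where "E = downclosure P Y {e}"
  have E: "E = {y \<in> Y. (y, e) \<in> P}"
    unfolding E_def downclosure_def by auto
  have "J \<subseteq> Y - E"
    using J unfolding E_def .
  have eY: "e \<in> Y" and e_max: "\<And>z. z \<in> Y \<Longrightarrow> (e, z) \<in> P \<Longrightarrow> z = e"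
    using assms(3) unfolding maxel_def by auto
  have J_not_below_E: "(x, z) \<notin> P" if "x \<in> J" "z \<in> E" for x z
  proof
    assume "(x, z) \<in> P"
    with \<open>z \<in> E\<close> \<open>trans P\<close> have "(x, e) \<in> P"
      unfolding E by (auto dest: transD)
    with \<open>x \<in> J\<close> \<open>J \<subseteq> Y - E\<close> show False
      unfolding E by auto
  qed
  have "x \<in> maxel P (E \<union> J) \<longleftrightarrow> x \<in> insert e (maxel P J)" for x
  proof (cases "x \<in> E")
    case True
    then show ?thesis
      using eY e_max \<open>J \<subseteq> Y - E\<close> \<open>(e, e) \<in> P\<close> unfolding maxel_def E by auto
  next
    case False
    then show ?thesis
      using J_not_below_E \<open>(e, e) \<in> P\<close> eY unfolding maxel_def E by auto
  qed
  then show ?thesis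
    unfolding E_def by blast
qed

lemma phi_diff_insert_maxel:
  assumes "finite E" "finite J" "E \<inter> J = {}" "e \<in> E" "E \<inter> L = {}"
    and max: "maxel P (E \<union> J) = insert e (maxel P J)"
  shows "phi P \<tau> \<eta> L (E \<union> J) - phi P \<tau> \<eta> (insert e L) (E \<union> J) =
    (\<eta> e + 1) * (\<Prod>i \<in> E - {e}. \<tau> i) * phi P \<tau> \<eta> L J"
proof -
  have eJ: "e \<notin> J" and mJ: "maxel P J \<subseteq> J"
    using assms(3,4) maxel_subset[of P J] by auto
  have Int_L: "(E \<union> J) \<inter> L = J \<inter> L"
    and Int_insert: "(E \<union> J) \<inter> insert e L = insert e (J \<inter> L)"
    using assms(4,5) by auto
  have nonmax: "(E \<union> J) - maxel P (E \<union> J) = (E - {e}) \<union> (J - maxel P J)"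
    using max mJ assms(3,4) by auto
  have max_L: "maxel P (E \<union> J) - L = insert e (maxel P J - L)"
    and max_insert: "maxel P (E \<union> J) - insert e L = maxel P J - L"
    using max mJ eJ assms(4,5) by auto
  have prod_nonmax: "(\<Prod>i \<in> (E - {e}) \<union> (J - maxel P J). \<tau> i)
      = (\<Prod>i \<in> E - {e}. \<tau> i) * (\<Prod>i \<in> J - maxel P J. \<tau> i)"
    using assms(1-3) by (intro prod.union_disjoint) auto
  have prod_max: "(\<Prod>i \<in> insert e (maxel P J - L). \<eta> i) = \<eta> e * (\<Prod>i \<in> maxel P J - L. \<eta> i)"
    using assms(2) mJ eJ by (subst prod.insert) (auto intro: finite_subset)
  have card_Int: "card (insert e (J \<inter> L)) = Suc (card (J \<inter> L))"
    using assms(2) eJ by simp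
  have cond: "insert e (J \<inter> L) \<subseteq> insert e (maxel P J) \<longleftrightarrow> J \<inter> L \<subseteq> maxel P J"
    using eJ by auto
  show ?thesis
  proof (cases "J \<inter> L \<subseteq> maxel P J")
    case True
    then show ?thesis
      unfolding phi_def Int_L Int_insert max[symmetric] nonmax max_L max_insert
        prod_nonmax prod_max card_Int
      using cond max by (simp add: algebra_simps)
  next
    case False
    then show ?thesis
      unfolding phi_def Int_L Int_insert using cond max by simp
  qed
qed

lemma bij_betw_Un_downclosure_singleton:
  assumes "trans P" "(e, e) \<in> P" "e \<in> Y"
  shows "bij_betw ((\<union>) (downclosure P Y {e}))
    (downsets P (Y - downclosure P Y {e})) {I \<in> downsets P Y. e \<in> I}"
proof (rule bij_betw_byWitness[where f' = "\<lambda>I. I - downclosure P Y {e}"])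
  define E where "E = downclosure P Y {e}"
  have eE: "e \<in> E"
    using assms(2,3) unfolding E_def downclosure_def by auto
  have E_down: "E \<in> downsets P Y"
    unfolding E_def using assms(1) by (rule downclosure_in_downsets)
  show "\<forall>J \<in> downsets P (Y - E). (E \<union> J) - E = J"
    unfolding downsets_def by auto
  show "\<forall>I \<in> {I \<in> downsets P Y. e \<in> I}. E \<union> (I - E) = I"
    unfolding downsets_def E_def downclosure_def by auto
  show "(\<union>) E ` downsets P (Y - E) \<subseteq> {I \<in> downsets P Y. e \<in> I}"
    using E_down eE unfolding downsets_def by blast
  show "(\<lambda>I. I - E) ` {I \<in> downsets P Y. e \<in> I} \<subseteq> downsets P (Y - E)"
    unfolding downsets_def by auto
qed

lemma pipoly_diff_insert_maxel:
  assumes "finite Y" "trans P" "(e, e) \<in> P" "e \<in> maxel P Y"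
    and "L \<inter> downclosure P Y {e} = {}"
  shows "pipoly P \<tau> \<eta> Y L - pipoly P \<tau> \<eta> Y (insert e L) =
    monom ((\<eta> e + 1) * (\<Prod>i \<in> downclosure P Y {e} - {e}. \<tau> i)) (card (downclosure P Y {e}))
      * pipoly P \<tau> \<eta> (Y - downclosure P Y {e}) L"
proof -
  define E where "E = downclosure P Y {e}"
  define c where "c = (\<eta> e + 1) * (\<Prod>i \<in> E - {e}. \<tau> i)"
  have "e \<in> Y"
    using assms(4) maxel_subset[of P Y] by blast
  then have "e \<in> E"
    unfolding E_def downclosure_def using assms(3) by blast
  have "finite E"
    using assms(1) unfolding E_def downclosure_def by simp
  have summand: "monom (phi P \<tau> \<eta> L (E \<union> J) - phi P \<tau> \<eta> (insert e L) (E \<union> J)) (card (E \<union> J))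
      = monom c (card E) * monom (phi P \<tau> \<eta> L J) (card J)" if "J \<in> downsets P (Y - E)" for J
  proof -
    have J: "J \<subseteq> Y - E" "finite J"
      using that assms(1) unfolding downsets_def by (auto intro: finite_subset)
    then have "card (E \<union> J) = card E + card J"
      using \<open>finite E\<close> by (intro card_Un_disjoint) auto
    moreover have "maxel P (E \<union> J) = insert e (maxel P J)"
      unfolding E_def using assms(2-4) J(1)[unfolded E_def]
      by (rule maxel_Un_downclosure_singleton)
    then have "phi P \<tau> \<eta> L (E \<union> J) - phi P \<tau> \<eta> (insert e L) (E \<union> J) = c * phi P \<tau> \<eta> L J"
      unfolding c_def using \<open>finite E\<close> J \<open>e \<in> E\<close> assms(5)[folded E_def]
      by (intro phi_diff_insert_maxel) auto
    ultimately show ?thesis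
      by (simp add: mult_monom)
  qed
  have "pipoly P \<tau> \<eta> Y L - pipoly P \<tau> \<eta> Y (insert e L)
      = (\<Sum>I \<in> {I \<in> downsets P Y. e \<in> I}.
           monom (phi P \<tau> \<eta> L I - phi P \<tau> \<eta> (insert e L) I) (card I))"
    using assms(1) by (rule pipoly_diff_insert)
  also have "\<dots> = (\<Sum>J \<in> downsets P (Y - E).
      monom (phi P \<tau> \<eta> L (E \<union> J) - phi P \<tau> \<eta> (insert e L) (E \<union> J)) (card (E \<union> J)))"
    using bij_betw_Un_downclosure_singleton[OF assms(2,3) \<open>e \<in> Y\<close>]
    unfolding E_def by (rule sum.reindex_bij_betw[symmetric])
  also have "\<dots> = monom c (card E) * pipoly P \<tau> \<eta> (Y - E) L"
    unfolding pipoly_def by (simp add: summand sum_distrib_left)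
  finally show ?thesis
    unfolding c_def E_def .
qed

theorem proposition3p1:
  fixes \<Omega> :: "'a set" and P :: "('a \<times> 'a) set"
    and \<tau> \<eta> :: "'a \<Rightarrow> 'k::comm_ring_1"
    and Y L :: "'a set" and e :: 'a and k :: nat
  assumes "finite \<Omega>"
    and "partial_order_on \<Omega> P"
    and "Y \<subseteq> \<Omega>"
    and "L \<in> upsets P Y"
    and "e \<in> maxel P Y - L"
    and "k = card (downclosure P Y {e})"
  shows "pipoly P \<tau> \<eta> Y L - pipoly P \<tau> \<eta> Y (L \<union> {e}) =
         monom ((\<eta> e + 1) * (\<Prod>i \<in> downclosure P Y {e} - {e}. \<tau> i)) k
           * pipoly P \<tau> \<eta> (Y - downclosure P Y {e}) L"
proof -
  have "finite Y"
    using assms(1,3) by (rule finite_subset[rotated])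
  have "trans P" and refl: "refl_on \<Omega> P"
    using partial_order_onD[OF assms(2)] by blast+
  have "e \<in> maxel P Y" "e \<notin> L" and "e \<in> Y"
    using assms(5) maxel_subset[of P Y] by auto
  have "(e, e) \<in> P"
    using refl_onD[OF refl] assms(3) \<open>e \<in> Y\<close> by blast
  have "L \<inter> downclosure P Y {e} = {}"
    using assms(4) \<open>e \<in> Y\<close> \<open>e \<notin> L\<close> by (rule upset_Int_downclosure_singleton)
  then show ?thesis
    using pipoly_diff_insert_maxel[OF \<open>finite Y\<close> \<open>trans P\<close> \<open>(e, e) \<in> P\<close> \<open>e \<in> maxel P Y\<close>]
    unfolding assms(6) by simp
qed

end
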